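(* Under the setting below, for every $k\in\{1,\dots,p-1\}$, $$\mathsf v_n^{2k}=\frac{(-1)^k\,(v_n^{2p}\kappa_n^{2p}+1)}{p\,\kappa_n^{2k}(\kappa_n^2-\kappa_n^{-2})}\sum_{a=0}^{p-1}q^{-k(2a-1)}\beta_{a,n}.$$ Moreover, $\beta_{k,n}=\mathsf u_n^k\alpha_{0,n}\mathsf u_n^{1-k}$, and hence, using the known reconstruction identities below, $$\beta_{k,n}=\mathsf U_n\Big[\big(\mathsf B^{-1}(\mu_{n,+})\mathsf A(\mu_{n,+})\big)^k\,\mathsf A^{-1}(\mu_{n,-})\mathsf B(\mu_{n,-})\,\big(\mathsf B^{-1}(\mu_{n,+})\mathsf A(\mu_{n,+})\big)^{1-k}\Big]\mathsf U_n^{-1}.$$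
   Context: Let $p\ge3$ be odd, $q\in\mathbb C$ with $q^p=1$ and $q^2$ a primitive $p$-th root of unity, $q^{1/2}$ a fixed square root with $(q^{1/2})^2=q$. At site $n$ of a chain of $\mathsf N$ sites, $\mathsf u_n,\mathsf v_n$ are invertible operators on $\mathbb C^p$ (tensored with identity elsewhere) with $\mathsf u_n\mathsf v_n=q\mathsf v_n\mathsf u_n$, $\mathsf u_n^p=u_n^p\,\mathrm{Id}$, $\mathsf v_n^p=v_n^p\,\mathrm{Id}$ for nonzero scalars $u_n,v_n$; operators at different sites commute. Let $\kappa_n\ne0$ with $\kappa_n^4\ne1$ and $v_n^{2p}\kappa_n^{2p}\ne-1$. Define $\beta_{k,n}=(q^{2k-1}\mathsf v_n^2+\kappa_n^2)(q^{2k-1}\mathsf v_n^2\kappa_n^2+1)^{-1}$ for $k\in\mathbb Z$, and $\alpha_{0,n}=(q^{-1}\mathsf v_n^2+\kappa_n^2)(q^{-1}\mathsf v_n^2\kappa_n^2+1)^{-1}\mathsf u_n^{-1}$. For the second part: the Lax matrix is $\mathsf L_n(\lambda)=\kappa_n\begin{pmatrix}\mathsf u_n(q^{-1/2}\mathsf v_n\kappa_n+q^{1/2}\mathsf v_n^{-1}\kappa_n^{-1})&(\lambda_n\mathsf v_n-(\mathsf v_n\lambda_n)^{-1})/i\\(\lambda_n/\mathsf v_n-\mathsf v_n/\lambda_n)/i&\mathsf u_n^{-1}(q^{1/2}\mathsf v_n\kappa_n^{-1}+q^{-1/2}\mathsf v_n^{-1}\kappa_n)\end{pmatrix}$, $\lambda_n=\lambda/\xi_n$,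 and $\mathsf L_{\mathsf N}(\lambda)\cdots\mathsf L_1(\lambda)=\begin{pmatrix}\mathsf A(\lambda)&\mathsf B(\lambda)\\ \mathsf C(\lambda)&\mathsf D(\lambda)\end{pmatrix}$. Set $\mu_{n,\pm}=i\kappa_n^{\pm1}q^{1/2}\xi_n$. $\mathsf U_n$ is an invertible operator with $\mathsf U_n\mathsf L_{\mathsf N}(\lambda)\cdots\mathsf L_1(\lambda)\mathsf U_n^{-1}=\mathsf L_{n-1}(\lambda)\cdots\mathsf L_1(\lambda)\mathsf L_{\mathsf N}(\lambda)\cdots\mathsf L_n(\lambda)$. Assume $\mathsf B(\mu_{n,+})$ and $\mathsf A(\mu_{n,-})$ are invertible. Known identities (Oota): $\mathsf u_n=\mathsf U_n\mathsf B^{-1}(\mu_{n,+})\mathsf A(\mu_{n,+})\mathsf U_n^{-1}$ and $\alpha_{0,n}=\mathsf U_n\mathsf A^{-1}(\mu_{n,-})\mathsf B(\mu_{n,-})\mathsf U_n^{-1}$. *)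

theory Defs
  imports "HOL-Analysis.Analysis"
begin

text \<open>Operators on the (finite-dimensional) state space are modelled as complex square
matrices of type complex^'d^'d; matrix product is ** and the scalar c is the operator mat c.\<close>

type_synonym 'd op = "complex^'d^'d"

primrec mpow :: "'d::finite op \<Rightarrow> nat \<Rightarrow> 'd op" where
  "mpow A 0 = mat 1"
| "mpow A (Suc k) = A ** mpow A k"

definition zpow :: "'d::finite op \<Rightarrow> int \<Rightarrow> 'd op" where
  "zpow A k = (if 0 \<le> k then mpow A (nat k) else mpow (matrix_inv A) (nat (- k)))"

definition primitive_root :: "nat \<Rightarrow> complex \<Rightarrow> bool" where
  "primitive_root p z \<longleftrightarrow> z ^ p = 1 \<and> (\<forall>j. 0 < j \<and> j < p \<longrightarrow> z ^ j \<noteq> 1)"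

definition beta :: "complex \<Rightarrow> complex \<Rightarrow> 'd::finite op \<Rightarrow> int \<Rightarrow> 'd op" where
  "beta q \<kappa> V k =
     (mat (q powi (2*k - 1)) ** (V ** V) + mat (\<kappa>^2)) **
     matrix_inv (mat (q powi (2*k - 1) * \<kappa>^2) ** (V ** V) + mat 1)"

definition alpha0 :: "complex \<Rightarrow> complex \<Rightarrow> 'd::finite op \<Rightarrow> 'd op \<Rightarrow> 'd op" where
  "alpha0 q \<kappa> U V =
     (mat (inverse q) ** (V ** V) + mat (\<kappa>^2)) **
     matrix_inv (mat (inverse q * \<kappa>^2) ** (V ** V) + mat 1) ** matrix_inv U"

text \<open>2x2 matrices with operator entries, written (A, B, C, D) for [[A,B],[C,D]].\<close>
type_synonym 'd mat2 = "'d op \<times> 'd op \<times> 'd op \<times> 'd op"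

fun mul2 :: "'d::finite mat2 \<Rightarrow> 'd mat2 \<Rightarrow> 'd mat2" where
  "mul2 (a, b, c, d) (e, f, g, h) =
     (a ** e + b ** g, a ** f + b ** h, c ** e + d ** g, c ** f + d ** h)"

definition id2 :: "'d::finite mat2" where
  "id2 = (mat 1, mat 0, mat 0, mat 1)"

fun conj2 :: "'d::finite op \<Rightarrow> 'd mat2 \<Rightarrow> 'd mat2" where
  "conj2 W (a, b, c, d) =
     (W ** a ** matrix_inv W, W ** b ** matrix_inv W,
      W ** c ** matrix_inv W, W ** d ** matrix_inv W)"

text \<open>Lax matrix L_n(lambda), with qh = q^{1/2} and lambda_n = lambda / xi_n.\<close>
definition lax :: "complex \<Rightarrow> (nat \<Rightarrow> 'd::finite op) \<Rightarrow> (nat \<Rightarrow> 'd op) \<Rightarrow>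
    (nat \<Rightarrow> complex) \<Rightarrow> (nat \<Rightarrow> complex) \<Rightarrow> nat \<Rightarrow> complex \<Rightarrow> 'd mat2" where
  "lax qh u v \<kappa> \<xi> n lam =
    (let l = lam / \<xi> n; k = \<kappa> n; U = u n; V = v n;
         Ui = matrix_inv U; Vi = matrix_inv V
     in (mat k ** U ** (mat (inverse qh * k) ** V + mat (qh * inverse k) ** Vi),
         mat (k / \<i>) ** (mat l ** V - mat (inverse l) ** Vi),
         mat (k / \<i>) ** (mat l ** Vi - mat (inverse l) ** V),
         mat k ** Ui ** (mat (qh * inverse k) ** V + mat (inverse qh * k) ** Vi)))"

definition laxprod :: "complex \<Rightarrow> (nat \<Rightarrow> 'd::finite op) \<Rightarrow> (nat \<Rightarrow> 'd op) \<Rightarrow>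
    (nat \<Rightarrow> complex) \<Rightarrow> (nat \<Rightarrow> complex) \<Rightarrow> nat list \<Rightarrow> complex \<Rightarrow> 'd mat2" where
  "laxprod qh u v \<kappa> \<xi> ms lam = foldr (\<lambda>m acc. mul2 (lax qh u v \<kappa> \<xi> m lam) acc) ms id2"

text \<open>Monodromy L_N ... L_1 and its entries A, B.\<close>
definition monodromy :: "complex \<Rightarrow> (nat \<Rightarrow> 'd::finite op) \<Rightarrow> (nat \<Rightarrow> 'd op) \<Rightarrow>
    (nat \<Rightarrow> complex) \<Rightarrow> (nat \<Rightarrow> complex) \<Rightarrow> nat \<Rightarrow> complex \<Rightarrow> 'd mat2" where
  "monodromy qh u v \<kappa> \<xi> N lam = laxprod qh u v \<kappa> \<xi> (rev [1..<N+1]) lam"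

definition opA :: "'d::finite mat2 \<Rightarrow> 'd op" where "opA M = fst M"
definition opB :: "'d::finite mat2 \<Rightarrow> 'd op" where "opB M = fst (snd M)"

end

theory Submission
  imports Defs
begin

(*
  Put Y = v^2, K = kappa^2 and M_c = (c Y + K)(c K Y + 1)^{-1}, a Moebius transform of Y,
  so that beta_k = M_{q^{2k-1}} and alpha_0 = M_{q^{-1}} u^{-1}.

  (1) Since Y^p is a scalar and p is odd, (c K Y + 1)^{-1} is a finite alternating geometric
      series in Y, so M_c = 1/K + sum_{j<p} D_j c^j Y^j.  Averaging over the p values
      c = q^{2a-1} against the character q^{-k(2a-1)} isolates the coefficient of Y^k
      (orthogonality of the powers of the primitive root q^2); solving for Y^k = v^{2k}
      gives the first formula.
  (2) The Weyl relation u Y = q^2 Y u gives u M_c = M_{q^2 c} u, hence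
      u^k M_{q^{-1}} = M_{q^{2k-1}} u^k for all integers k, which is beta_k = u^k alpha_0 u^{1-k}.
  (3) Conjugating (2) by the operator U_n and inserting Oota's reconstruction identities for
      u and alpha_0 gives the last formula.
*)

subsection \<open>Scalar operators and matrix algebra\<close>

lemma mat_mult_left: "mat a ** (A::'a::semiring_1^'m^'n) = (\<chi> i j. a * A$i$j)"
  unfolding matrix_matrix_mult_def mat_def
  by (auto simp: if_distrib if_distribR sum.delta[OF finite] cong: if_cong)

lemma mat_mult_right: "(A::'a::semiring_1^'m^'n) ** mat a = (\<chi> i j. A$i$j * a)"
  unfolding matrix_matrix_mult_def mat_def
  by (auto simp: if_distrib if_distribR sum.delta'[OF finite] cong: if_cong)

lemma mat_mult_mat: "mat a ** mat b = (mat (a*b) :: 'a::semiring_1^'n^'n)"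
  unfolding mat_mult_left by (simp add: mat_def vec_eq_iff)

lemma mat_commute: "mat a ** (A::'a::comm_semiring_1^'n^'n) = A ** mat a"
  unfolding mat_mult_left mat_mult_right by (simp add: vec_eq_iff mult.commute)

lemma mat_add: "mat a + mat b = (mat (a+b) :: 'a::semiring_1^'n^'n)"
  by (simp add: vec_eq_iff mat_def)

lemma mat_diff: "mat a - mat b = (mat (a-b) :: 'a::ring_1^'n^'n)"
  by (simp add: vec_eq_iff mat_def)

lemma mat_uminus: "- mat a = (mat (-a) :: 'a::ring_1^'n^'n)"
  by (simp add: vec_eq_iff mat_def)

lemma mat_sum: "mat (\<Sum>i\<in>S. f i) = (\<Sum>i\<in>S. (mat (f i) :: 'a::semiring_1^'n^'n))"
proof (cases "finite S")
  case True thus ?thesis by (induction S rule: finite_induct) (auto simp: mat_add[symmetric])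
qed simp

lemma matrix_add_rdistrib: "((A::'a::semiring_1^'m^'n) + B) ** C = A ** C + B ** C"
  by (simp add: matrix_matrix_mult_def vec_eq_iff distrib_right sum.distrib)

lemma matrix_uminus_rmult: "(- (A::'a::ring_1^'m^'n)) ** C = - (A ** C)"
  by (simp add: matrix_matrix_mult_def vec_eq_iff sum_negf)

lemma matrix_sum_rmult: "(\<Sum>i\<in>S. f i) ** (B::'a::semiring_1^'m^'n) = (\<Sum>i\<in>S. f i ** B)"
proof (cases "finite S")
  case True thus ?thesis by (induction S rule: finite_induct) (auto simp: matrix_add_rdistrib)
qed simp

lemma matrix_sum_lmult: "(B::'a::semiring_1^'m^'n) ** (\<Sum>i\<in>S. f i) = (\<Sum>i\<in>S. B ** f i)"
proof (cases "finite S")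
  case True thus ?thesis by (induction S rule: finite_induct) (auto simp: matrix_add_ldistrib)
qed simp

lemma mpow_add: "mpow A (m+n) = mpow A m ** mpow A n"
  by (induction m) (auto simp: matrix_mul_assoc)

lemma mpow_commute: "A ** mpow A n = mpow A n ** A"
  using mpow_add[of A n 1] mpow_add[of A 1 n] by (simp add: add.commute)

lemma mpow_mult: "mpow A (m*n) = mpow (mpow A m) n"
  by (induction n) (auto simp: mpow_add)

lemma mpow_two: "mpow A 2 = A ** A"
  by (simp add: numeral_2_eq_2)

lemma mpow_scaled: "mpow (mat c ** A) n = mat (c^n) ** mpow A n"
proof (induction n)
  case (Suc n)
  have "mpow (mat c ** A) (Suc n) = mat c ** (A ** mat (c^n)) ** mpow A n"
    using Suc by (simp add: matrix_mul_assoc)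
  also have "\<dots> = (mat c ** mat (c^n)) ** (A ** mpow A n)"
    by (simp only: mat_commute[of "c^n" A, symmetric] matrix_mul_assoc)
  finally show ?case by (simp add: mat_mult_mat)
qed simp

lemma mpow_inverse_pair:
  assumes "A ** B = mat 1"
  shows "mpow A n ** mpow B n = mat 1"
proof (induction n)
  case (Suc n)
  have "mpow A (Suc n) ** mpow B (Suc n) = A ** (mpow A n ** mpow B n) ** B"
    by (simp add: mpow_commute matrix_mul_assoc)
  thus ?case using Suc assms by simp
qed simp

lemma matrix_inv_left: "invertible A \<Longrightarrow> matrix_inv A ** A = mat 1"
  unfolding invertible_def matrix_inv_def by (rule someI2_ex) auto

lemma matrix_inv_right: "invertible A \<Longrightarrow> A ** matrix_inv A = mat 1"
  unfolding invertible_def matrix_inv_def by (rule someI2_ex) auto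

lemma matrix_inv_unique:
  fixes A B :: "'a::field^'n^'n"
  assumes AB: "A ** B = mat 1"
  shows "matrix_inv A = B"
proof -
  have "invertible A" using AB invertible_right_inverse by blast
  hence "matrix_inv A = matrix_inv A ** (A ** B)" using AB by simp
  also have "\<dots> = B" using matrix_inv_left[OF \<open>invertible A\<close>] by (simp add: matrix_mul_assoc)
  finally show ?thesis .
qed

lemma conj_cancel:
  fixes W iW A B :: "'a::semiring_1^'n^'n"
  assumes "iW ** W = mat 1"
  shows "(W ** A ** iW) ** (W ** B ** iW) = W ** (A ** B) ** iW"
proof -
  have "iW ** (W ** X) = X" for X :: "'a^'n^'n" by (simp add: matrix_mul_assoc assms)
  thus ?thesis by (simp add: matrix_mul_assoc[symmetric])
qed

lemma mpow_shift:
  assumes "\<forall>m. A ** H m = H (m + e) ** A"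
  shows "mpow A n ** H m = H (m + int n * e) ** mpow A n"
proof (induction n arbitrary: m)
  case (Suc n)
  have "mpow A (Suc n) ** H m = A ** (mpow A n ** H m)" by (simp add: matrix_mul_assoc)
  also have "\<dots> = (A ** H (m + int n * e)) ** mpow A n" using Suc by (simp add: matrix_mul_assoc)
  also have "\<dots> = H (m + int n * e + e) ** (A ** mpow A n)"
    using assms by (simp add: matrix_mul_assoc)
  finally show ?case by (simp add: algebra_simps)
qed simp

text \<open>The same for integer powers of an invertible operator shifting the index by 2;
  this is the form in which the Weyl relation acts on the operators beta.\<close>

lemma zpow_shift:
  assumes U_inv: "invertible U" and shift: "\<forall>m. U ** H m = H (m + 2) ** U"
  shows "zpow U k ** H m = H (m + 2*k) ** zpow U k"
proof -
  have shift_inv: "\<forall>m. matrix_inv U ** H m = H (m + (-2)) ** matrix_inv U"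
  proof
    fix m
    have "matrix_inv U ** H m = matrix_inv U ** (H m ** U) ** matrix_inv U"
      using matrix_inv_right[OF U_inv] by (simp add: matrix_mul_assoc[symmetric])
    also have "H m ** U = U ** H (m + (-2))" using shift[rule_format, of "m + (-2)"] by simp
    finally show "matrix_inv U ** H m = H (m + (-2)) ** matrix_inv U"
      using matrix_inv_left[OF U_inv] by (simp add: matrix_mul_assoc)
  qed
  show ?thesis
  proof (cases "0 \<le> k")
    case True
    thus ?thesis using mpow_shift[OF shift, of "nat k" m] by (simp add: zpow_def mult.commute)
  next
    case False
    thus ?thesis using mpow_shift[OF shift_inv, of "nat (-k)" m] by (simp add: zpow_def mult.commute)
  qed
qed

lemma zpow_cancel:
  assumes U_inv: "invertible U"
  shows "zpow U k ** matrix_inv U ** zpow U (1-k) = mat 1"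
proof -
  have step: "zpow U k ** matrix_inv U = zpow U (k-1)"
  proof (cases "1 \<le> k")
    case True
    define m where "m = nat (k-1)"
    have m: "nat k = Suc m" "nat (k-1) = m"
      using Suc_nat_eq_nat_zadd1[of "k-1"] True unfolding m_def by simp_all
    have "mpow U (Suc m) ** matrix_inv U = mpow U m ** (U ** matrix_inv U)"
      by (simp add: mpow_commute matrix_mul_assoc)
    thus ?thesis using True m matrix_inv_right[OF U_inv] by (simp add: zpow_def)
  next
    case False
    hence m: "nat (-(k-1)) = Suc (nat (-k))" by simp
    have "mpow (matrix_inv U) (nat (-k)) ** matrix_inv U = mpow (matrix_inv U) (Suc (nat (-k)))"
      by (simp add: mpow_commute)
    thus ?thesis using False m by (simp add: zpow_def)
  qed
  have opposite: "zpow U j ** zpow U (-j) = mat 1" for j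
  proof (cases j "0::int" rule: linorder_cases)
    case less
    thus ?thesis using mpow_inverse_pair[OF matrix_inv_left[OF U_inv]] by (simp add: zpow_def)
  next
    case greater
    thus ?thesis using mpow_inverse_pair[OF matrix_inv_right[OF U_inv]] by (simp add: zpow_def)
  qed (simp add: zpow_def)
  show ?thesis using step opposite[of "k-1"] by simp
qed

lemma zpow_conj:
  fixes W Y :: "'d::finite op"
  assumes W_inv: "invertible W" and Y_inv: "invertible Y"
  shows "zpow (W ** Y ** matrix_inv W) k = W ** zpow Y k ** matrix_inv W"
proof -
  have W_left: "matrix_inv W ** (W ** X) = X" for X
    by (simp add: matrix_mul_assoc matrix_inv_left[OF W_inv])
  have mpow_conj: "mpow (W ** A ** matrix_inv W) n = W ** mpow A n ** matrix_inv W" for A n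
  proof (induction n)
    case 0 show ?case using matrix_inv_right[OF W_inv] by simp
  next
    case (Suc n) thus ?case by (simp add: matrix_mul_assoc[symmetric] W_left)
  qed
  have inv_conj: "matrix_inv (W ** Y ** matrix_inv W) = W ** matrix_inv Y ** matrix_inv W"
  proof (rule matrix_inv_unique)
    have "W ** Y ** matrix_inv W ** (W ** matrix_inv Y ** matrix_inv W)
        = W ** (Y ** matrix_inv Y) ** matrix_inv W"
      by (simp add: matrix_mul_assoc[symmetric] W_left)
    thus "W ** Y ** matrix_inv W ** (W ** matrix_inv Y ** matrix_inv W) = mat 1"
      using matrix_inv_right[OF Y_inv] matrix_inv_right[OF W_inv] by simp
  qed
  show ?thesis by (simp add: zpow_def mpow_conj inv_conj)
qed

subsection \<open>Character sums over the odd powers of q\<close>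

text \<open>If q^2 is a primitive p-th root of unity, then the sum of q^{(2a-1)m} over a < p vanishes
  for every nonzero m with |m| < p: it is a geometric sum with ratio q^{2m} \<noteq> 1, q^{2mp} = 1.\<close>

lemma odd_power_sum_vanishes:
  fixes q :: complex
  assumes prim: "primitive_root p (q^2)" and m: "m \<noteq> 0" "\<bar>m\<bar> < int p"
  shows "(\<Sum>a<p. q powi ((2*int a - 1)*m)) = 0"
proof -
  have "0 < p" using m by (metis abs_ge_zero of_nat_0_less_iff order_le_less_trans)
  hence q0: "q \<noteq> 0" using prim unfolding primitive_root_def by (auto simp: power_0_left)
  define r where "r = q powi (2*m)"
  have summand: "q powi ((2*int a - 1)*m) = q powi (-m) * r ^ a" for a
  proof -
    have "q powi ((2*int a - 1)*m) = q powi (-m + 2*m*int a)" by (simp add: algebra_simps)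
    also have "\<dots> = q powi (-m) * q powi (2*m*int a)" by (rule power_int_add) (simp add: q0)
    finally show ?thesis by (simp add: r_def power_int_power')
  qed
  have r_square: "r = (q^2) powi m" by (simp add: r_def power_int_power)
  have r_ne_1: "r \<noteq> 1"
  proof (cases "m > 0")
    case True
    hence "r = (q^2)^(nat m)" using r_square by (simp add: power_int_nonneg_exp)
    moreover have "0 < nat m" "nat m < p" using True m by auto
    ultimately show ?thesis using prim unfolding primitive_root_def by auto
  next
    case False
    hence "m = - int (nat (-m))" using m by auto
    hence "r = inverse ((q^2)^(nat (-m)))" using r_square
      by (metis power_int_minus power_int_of_nat)
    moreover have "0 < nat (-m)" "nat (-m) < p" using False m by auto
    ultimately show ?thesis using prim unfolding primitive_root_def
      by (metis inverse_1 inverse_inverse_eq)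
  qed
  have "r ^ p = (q^2) powi (m * int p)" using r_square by (simp add: power_int_power')
  also have "\<dots> = ((q^2) powi (int p)) powi m" by (metis power_int_mult mult.commute)
  finally have r_p: "r ^ p = 1" using prim unfolding primitive_root_def by simp
  have "(\<Sum>a<p. q powi ((2*int a - 1)*m)) = q powi (-m) * (\<Sum>a<p. r^a)"
    by (simp add: summand sum_distrib_left)
  also have "(\<Sum>a<p. r^a) = 0" using geometric_sum[OF r_ne_1, of p] r_p by simp
  finally show ?thesis by simp
qed

text \<open>Orthogonality: the characters c \<mapsto> c^j, evaluated at c = q^{2a-1}, a < p, are orthogonal
  for 0 \<le> j, k < p.  This is what isolates a single power of Y in the Fourier inversion below.\<close>

lemma odd_power_orthogonality:
  fixes q :: complex
  assumes prim: "primitive_root p (q^2)" and j: "j < p" and k: "k < p"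
  shows "(\<Sum>a<p. q powi (-(int k*(2*int a-1))) * (q powi (2*int a - 1))^j)
       = (if j = k then of_nat p else 0)"
proof -
  have q0: "q \<noteq> 0" using prim j unfolding primitive_root_def by (auto simp: power_0_left)
  have summand: "q powi (-(int k*(2*int a-1))) * (q powi (2*int a - 1))^j
      = q powi ((2*int a - 1)*(int j - int k))" for a
  proof -
    have "q powi ((2*int a - 1)*(int j - int k))
        = q powi (-(int k*(2*int a-1)) + (2*int a - 1) * int j)"
      by (simp add: algebra_simps)
    also have "\<dots> = q powi (-(int k*(2*int a-1))) * q powi ((2*int a - 1) * int j)"
      by (rule power_int_add) (simp add: q0)
    finally show ?thesis by (simp add: power_int_power')
  qed
  have "(\<Sum>a<p. q powi (-(int k*(2*int a-1))) * (q powi (2*int a - 1))^j)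
      = (\<Sum>a<p. q powi ((2*int a - 1)*(int j - int k)))"
    by (simp only: summand)
  also have "\<dots> = (if j = k then of_nat p else 0)"
  proof (cases "j = k")
    case False
    have "\<bar>int j - int k\<bar> < int p" using j k by linarith
    thus ?thesis using odd_power_sum_vanishes[OF prim] False by simp
  qed simp
  finally show ?thesis .
qed

subsection \<open>The Moebius transform of an operator whose p-th power is scalar\<close>

text \<open>For odd p and X^p = s \<noteq> -1, the operator X + 1 is inverted by the truncated alternating
  geometric series sum_{j<p} (-1)^j X^j / (1 + s): the product telescopes to (1 + s)/(1 + s).\<close>

lemma inverse_by_alternating_series:
  assumes X_p: "mpow X p = mat s" and p_odd: "odd p" and s: "s \<noteq> -1"
  shows "(X + mat 1) ** (\<Sum>j<p. mat ((-1)^j / (1+s)) ** mpow X j) = mat 1"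
proof -
  define g where "g j = mat ((-1)^j / (1+s)) ** mpow X j" for j
  have telescoping: "(X + mat 1) ** g j = g j - g (Suc j)" for j
  proof -
    have "X ** g j = (X ** mat ((-1)^j / (1+s))) ** mpow X j"
      unfolding g_def by (simp add: matrix_mul_assoc)
    also have "\<dots> = (mat ((-1)^j / (1+s)) ** X) ** mpow X j"
      by (simp only: mat_commute)
    also have "\<dots> = - g (Suc j)"
      unfolding g_def by (simp add: matrix_mul_assoc mat_uminus[symmetric] matrix_uminus_rmult)
    finally show ?thesis by (simp add: matrix_add_rdistrib)
  qed
  have "(X + mat 1) ** (\<Sum>j<p. g j) = g 0 - g p"
    by (simp add: matrix_sum_lmult telescoping sum_lessThan_telescope')
  also have "\<dots> = mat (1/(1+s) - (-1) / (1+s) * s)"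
    using p_odd by (simp add: g_def X_p mat_mult_mat mat_diff)
  also have "1/(1+s) - (-1) / (1+s) * s = 1"
    using s by (simp add: field_simps add_eq_0_iff)
  finally show ?thesis unfolding g_def .
qed

text \<open>The Moebius transform (c Y + K)(c K Y + 1)^{-1}; beta_k and alpha_0 are instances of it.\<close>

definition moebius :: "'d::finite op \<Rightarrow> complex \<Rightarrow> complex \<Rightarrow> 'd op" where
  "moebius Y K c = (mat c ** Y + mat K) ** matrix_inv (mat (c*K) ** Y + mat 1)"

lemma moebius_denominator_inverse:
  fixes Y :: "'d::finite op"
  assumes c_p: "c^p = 1" and Y_p: "mpow Y p = mat t" and p_odd: "odd p"
    and nondeg: "K^p * t \<noteq> -1"
  shows moebius_denominator_invertible: "invertible (mat (c*K) ** Y + mat 1)"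
    and "matrix_inv (mat (c*K) ** Y + mat 1)
           = (\<Sum>j<p. mat ((-1)^j / (1 + K^p*t) * (c*K)^j) ** mpow Y j)"
proof -
  have X_p: "mpow (mat (c*K) ** Y) p = mat (K^p * t)"
    unfolding mpow_scaled Y_p mat_mult_mat using c_p by (simp add: power_mult_distrib)
  have right_inv: "(mat (c*K) ** Y + mat 1)
      ** (\<Sum>j<p. mat ((-1)^j / (1 + K^p*t)) ** mpow (mat (c*K) ** Y) j) = mat 1"
    by (rule inverse_by_alternating_series[OF X_p p_odd nondeg])
  thus "invertible (mat (c*K) ** Y + mat 1)" using invertible_right_inverse by blast
  show "matrix_inv (mat (c*K) ** Y + mat 1)
           = (\<Sum>j<p. mat ((-1)^j / (1 + K^p*t) * (c*K)^j) ** mpow Y j)"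
    unfolding matrix_inv_unique[OF right_inv] mpow_scaled
    by (simp add: matrix_mul_assoc mat_mult_mat)
qed

lemma moebius_expansion:
  fixes Y :: "'d::finite op"
  assumes c_p: "c^p = 1" and Y_p: "mpow Y p = mat t" and p_odd: "odd p"
    and nondeg: "K^p * t \<noteq> -1" and K0: "K \<noteq> 0"
  shows "moebius Y K c = mat (1/K) +
           (\<Sum>j<p. mat ((K-1/K)*((-1)^j/(1+K^p*t)*K^j) * c^j) ** mpow Y j)"
proof -
  define M where "M = mat (c*K) ** Y + mat 1"
  note M_inv = moebius_denominator_inverse[OF c_p Y_p p_odd nondeg, folded M_def]
  have numerator: "mat c ** Y + mat K = mat (1/K) ** M + mat (K - 1/K)"
  proof -
    have "mat (1/K) ** M = (mat (1/K) ** mat (c*K)) ** Y + mat (1/K)"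
      unfolding M_def by (simp add: matrix_add_ldistrib matrix_mul_assoc)
    also have "mat (1/K) ** mat (c*K) = (mat c :: 'd op)" using K0 by (simp add: mat_mult_mat)
    finally show ?thesis by (simp add: add.assoc mat_add)
  qed
  have "moebius Y K c = (mat (1/K) ** M + mat (K - 1/K)) ** matrix_inv M"
    unfolding moebius_def numerator M_def ..
  also have "\<dots> = mat (1/K) ** (M ** matrix_inv M) + mat (K - 1/K) ** matrix_inv M"
    by (simp add: matrix_add_rdistrib matrix_mul_assoc)
  also have "M ** matrix_inv M = mat 1" using matrix_inv_right M_inv(1) by blast
  also have "mat (K - 1/K) ** matrix_inv M =
      (\<Sum>j<p. mat ((K-1/K)*((-1)^j/(1+K^p*t)*K^j) * c^j) ** mpow Y j)"
    unfolding M_inv(2) matrix_sum_lmult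
    by (simp add: matrix_mul_assoc mat_mult_mat power_mult_distrib mult_ac)
  finally show ?thesis by simp
qed

text \<open>Fourier inversion: averaging the transforms at c = q^{2a-1} against q^{-k(2a-1)} kills the
  constant term and every power of Y except Y^k, by the orthogonality relations.\<close>

lemma moebius_fourier_inversion:
  fixes Y :: "'d::finite op" and q K t :: complex
  assumes prim: "primitive_root p (q^2)" and q_p: "q^p = 1"
    and Y_p: "mpow Y p = mat t" and p_odd: "odd p"
    and nondeg: "K^p * t \<noteq> -1" and K0: "K \<noteq> 0" and k: "1 \<le> k" "k < p"
  shows "(\<Sum>a<p. mat (q powi (-(int k*(2*int a-1)))) ** moebius Y K (q powi (2*int a - 1)))
     = mat (of_nat p * ((K-1/K)*((-1)^k/(1+K^p*t)*K^k))) ** mpow Y k"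
proof -
  define w where "w a = q powi (-(int k*(2*int a-1)))" for a :: nat
  define c where "c a = q powi (2*int a - 1)" for a :: nat
  define D where "D j = (K-1/K)*((-1)^j/(1+K^p*t)*K^j)" for j :: nat
  have c_p: "(c a)^p = 1" for a
  proof -
    have "(c a)^p = (q powi (int p)) powi (2*int a - 1)"
      unfolding c_def by (simp add: power_int_power' mult.commute power_int_mult)
    thus ?thesis using q_p by simp
  qed
  have expansion: "moebius Y K (c a) = mat (1/K) + (\<Sum>j<p. mat (D j * (c a)^j) ** mpow Y j)" for a
    unfolding D_def by (rule moebius_expansion[OF c_p Y_p p_odd nondeg K0])
  have "(\<Sum>a<p. mat (w a) ** moebius Y K (c a))
      = (\<Sum>a<p. mat (w a * (1/K))) + (\<Sum>a<p. \<Sum>j<p. mat (w a * (D j * (c a)^j)) ** mpow Y j)"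
    unfolding expansion
    by (simp add: matrix_add_ldistrib sum.distrib matrix_sum_lmult matrix_mul_assoc mat_mult_mat)
  also have "(\<Sum>a<p. mat (w a * (1/K))) = (mat ((\<Sum>a<p. w a * (c a)^0) * (1/K)) :: 'd op)"
    by (simp add: mat_sum sum_divide_distrib)
  also have "(\<Sum>a<p. w a * (c a)^0) = 0"
    unfolding w_def c_def using odd_power_orthogonality[OF prim, of 0 k] k by simp
  also have "(\<Sum>a<p. \<Sum>j<p. mat (w a * (D j * (c a)^j)) ** mpow Y j)
      = (\<Sum>j<p. mat (D j * (\<Sum>a<p. w a * (c a)^j)) ** mpow Y j)"
    by (subst sum.swap)
      (simp add: mat_sum[symmetric] matrix_sum_rmult[symmetric] sum_distrib_left mult_ac)
  also have "\<dots> = (\<Sum>j<p. if j = k then mat (D k * of_nat p) ** mpow Y k else 0)"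
    by (rule sum.cong[OF refl])
      (use odd_power_orthogonality[OF prim _ \<open>k < p\<close>] in \<open>auto simp: w_def c_def\<close>)
  also have "\<dots> = mat (D k * of_nat p) ** mpow Y k" using k by simp
  finally show ?thesis unfolding w_def c_def D_def by (simp add: mult_ac)
qed

subsection \<open>Weyl covariance of the Moebius transform\<close>

lemma weyl_affine_shift:
  assumes weyl: "U ** Y = mat d ** Y ** (U::'d::finite op)"
  shows "U ** (mat e ** Y + mat f) = (mat (d*e) ** Y + mat f) ** U"
proof -
  have "U ** (mat e ** Y) = (U ** mat e) ** Y" by (simp add: matrix_mul_assoc)
  also have "U ** mat e = mat e ** U" by (rule mat_commute[symmetric])
  also have "(mat e ** U) ** Y = mat e ** (U ** Y)" by (simp add: matrix_mul_assoc)
  also have "\<dots> = mat (d*e) ** Y ** U"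
    by (simp add: weyl matrix_mul_assoc mat_mult_mat mult.commute)
  finally show ?thesis by (simp add: matrix_add_ldistrib matrix_add_rdistrib mat_commute)
qed

lemma moebius_weyl_shift:
  fixes U Y :: "'d::finite op"
  assumes weyl: "U ** Y = mat d ** Y ** U"
    and inv1: "invertible (mat (c*K) ** Y + mat 1)"
    and inv2: "invertible (mat ((d*c)*K) ** Y + mat 1)"
  shows "U ** moebius Y K c = moebius Y K (d*c) ** U"
proof -
  define M1 where "M1 = mat (c*K) ** Y + mat 1"
  define M2 where "M2 = mat ((d*c)*K) ** Y + mat 1"
  have denominators: "U ** M1 = M2 ** U"
    unfolding M1_def M2_def using weyl_affine_shift[OF weyl] by (simp add: mult.assoc)
  have inverses: "U ** matrix_inv M1 = matrix_inv M2 ** U"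
  proof -
    have "matrix_inv M2 ** U = matrix_inv M2 ** U ** (M1 ** matrix_inv M1)"
      using matrix_inv_right[OF inv1] by (simp add: M1_def)
    also have "\<dots> = matrix_inv M2 ** (U ** M1) ** matrix_inv M1"
      by (simp add: matrix_mul_assoc)
    also have "\<dots> = (matrix_inv M2 ** M2) ** U ** matrix_inv M1"
      by (simp add: denominators matrix_mul_assoc)
    finally show ?thesis using matrix_inv_left[OF inv2] by (simp add: M2_def)
  qed
  have "U ** moebius Y K c = (U ** (mat c ** Y + mat K)) ** matrix_inv M1"
    unfolding moebius_def M1_def by (simp add: matrix_mul_assoc)
  also have "\<dots> = (mat (d*c) ** Y + mat K) ** (U ** matrix_inv M1)"
    by (simp add: weyl_affine_shift[OF weyl] matrix_mul_assoc)
  also have "\<dots> = moebius Y K (d*c) ** U"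
    unfolding inverses moebius_def M2_def by (simp add: matrix_mul_assoc)
  finally show ?thesis .
qed

lemma weyl_square:
  assumes weyl: "U ** V = mat q ** V ** (U::'d::finite op)"
  shows "U ** (V ** V) = mat (q^2) ** (V ** V) ** U"
proof -
  have "U ** (V ** V) = (U ** V) ** V" by (simp add: matrix_mul_assoc)
  also have "\<dots> = mat q ** V ** U ** V" by (simp only: weyl)
  also have "\<dots> = mat q ** V ** (U ** V)" by (simp add: matrix_mul_assoc)
  also have "\<dots> = mat q ** V ** (mat q ** V ** U)" by (simp only: weyl)
  also have "\<dots> = mat q ** (V ** mat q) ** V ** U" by (simp add: matrix_mul_assoc)
  also have "V ** mat q = mat q ** V" by (rule mat_commute[symmetric])
  also have "mat q ** (mat q ** V) ** V ** U = mat (q^2) ** (V ** V) ** U"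
    by (simp add: matrix_mul_assoc mat_mult_mat power2_eq_square)
  finally show ?thesis .
qed

lemma beta_moebius: "beta q \<kappa> V k = moebius (V ** V) (\<kappa>^2) (q powi (2*k - 1))"
  by (simp add: beta_def moebius_def)

lemma alpha0_moebius:
  "alpha0 q \<kappa> U V = moebius (V ** V) (\<kappa>^2) (q powi (-1)) ** matrix_inv U"
  by (simp add: alpha0_def moebius_def power_int_minus)

lemma mpow_square_scalar:
  assumes V_p: "mpow V p = mat s"
  shows "mpow (V ** V) p = mat (s^2)"
proof -
  have "mpow (V ** V) p = mpow (mpow V p) 2"
    by (simp add: mpow_two[symmetric] mpow_mult[symmetric] mult.commute)
  thus ?thesis by (simp add: V_p mpow_two mat_mult_mat power2_eq_square)
qed

text \<open>The scalar identity behind the normalisation in the first statement: a coefficient and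
  its reciprocal, up to a sign sg with sg^2 = 1, multiply to 1.\<close>

lemma reciprocal_product_cancel:
  fixes sg a b c n :: "'a::field"
  assumes "n \<noteq> 0" "a \<noteq> 0" "b \<noteq> 0" "c \<noteq> 0" "sg * sg = 1"
  shows "sg * b / (n * c * a) * (n * (a * (sg / b * c))) = 1"
proof -
  have "sg * b / (n * c * a) * (n * (a * (sg / b * c)))
      = (sg * sg) * (b * inverse b) * (n * inverse n) * (a * inverse a) * (c * inverse c)"
    by (simp only: divide_inverse inverse_mult_distrib mult_ac)
  thus ?thesis using assms by simp
qed

lemma even_power_from_betas:
  fixes V :: "'d::finite op" and q \<kappa> s :: complex
  assumes p_odd: "odd p" and q_p: "q^p = 1" and prim: "primitive_root p (q^2)"
    and V_p: "mpow V p = mat s" and nondeg: "s^2 * \<kappa>^(2*p) \<noteq> -1"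
    and \<kappa>0: "\<kappa> \<noteq> 0" and \<kappa>4: "\<kappa>^4 \<noteq> 1" and k: "1 \<le> k" "k < p"
  shows "mpow V (2*k) =
           mat ((-1)^k * (s^2 * \<kappa>^(2*p) + 1) /
                (of_nat p * \<kappa>^(2*k) * (\<kappa>^2 - inverse (\<kappa>^2)))) **
           (\<Sum>a<p. mat (q powi (- (int k * (2 * int a - 1)))) ** beta q \<kappa> V (int a))"
proof -
  define K where "K = \<kappa>^2"
  define t where "t = s^2"
  have K_p: "K^p * t = s^2 * \<kappa>^(2*p)" unfolding K_def t_def by (simp add: power_mult)
  have K_ne: "K \<noteq> 0" "K^k \<noteq> 0" "K - 1/K \<noteq> 0"
  proof -
    show "K \<noteq> 0" "K^k \<noteq> 0" using \<kappa>0 unfolding K_def by simp_all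
    show "K - 1/K \<noteq> 0"
    proof
      assume "K - 1/K = 0"
      hence "\<kappa>^4 = 1" using \<kappa>0 unfolding K_def by (simp add: field_simps flip: power_add)
      thus False using \<kappa>4 by contradiction
    qed
  qed
  have denom_ne: "1 + K^p * t \<noteq> 0" using nondeg K_p by (metis add_eq_0_iff add.commute)
  define coeff where "coeff = (-1)^k * (1 + K^p * t) / (of_nat p * K^k * (K - 1/K))"
  have sum_eq: "(\<Sum>a<p. mat (q powi (- (int k * (2 * int a - 1)))) ** beta q \<kappa> V (int a))
      = mat (of_nat p * ((K-1/K)*((-1)^k/(1+K^p*t)*K^k))) ** mpow (V ** V) k"
    unfolding beta_moebius K_def[symmetric]
    by (rule moebius_fourier_inversion[OF prim q_p mpow_square_scalar[OF V_p, folded t_def]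
          p_odd _ K_ne(1) k]) (use nondeg K_p in simp)
  have coeff_cancel: "coeff * (of_nat p * ((K-1/K)*((-1)^k/(1+K^p*t)*K^k))) = 1"
    unfolding coeff_def using odd_pos[OF p_odd] K_ne denom_ne
    by (intro reciprocal_product_cancel) (auto simp flip: power_add mult_2)
  have "mat coeff ** (\<Sum>a<p. mat (q powi (- (int k * (2 * int a - 1)))) ** beta q \<kappa> V (int a))
      = mpow (V ** V) k"
    unfolding sum_eq matrix_mul_assoc mat_mult_mat coeff_cancel by simp
  also have "\<dots> = mpow V (2*k)" by (simp add: mpow_mult mpow_two)
  also have "coeff = (-1)^k * (s^2 * \<kappa>^(2*p) + 1) /
                (of_nat p * \<kappa>^(2*k) * (\<kappa>^2 - inverse (\<kappa>^2)))"
    unfolding coeff_def K_p by (simp add: K_def power_mult inverse_eq_divide add.commute)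
  finally show ?thesis by simp
qed

text \<open>Second statement: the Weyl relation makes u^k conjugate the Moebius transforms along the
  odd powers of q, so beta_k = u^k alpha_0 u^{1-k} for every integer k.\<close>

lemma beta_from_alpha0:
  fixes U V :: "'d::finite op" and q \<kappa> s :: complex
  assumes p_odd: "odd p" and q_p: "q^p = 1"
    and U_inv: "invertible U" and weyl: "U ** V = mat q ** V ** U"
    and V_p: "mpow V p = mat s" and nondeg: "s^2 * \<kappa>^(2*p) \<noteq> -1"
  shows "beta q \<kappa> V k = zpow U k ** alpha0 q \<kappa> U V ** zpow U (1 - k)"
proof -
  have q0: "q \<noteq> 0" using q_p odd_pos[OF p_odd] by (cases "q = 0") (auto simp: power_0_left)
  define H where "H m = moebius (V ** V) (\<kappa>^2) (q powi m)" for m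
  have denominator_invertible: "invertible (mat (q powi m * \<kappa>^2) ** (V ** V) + mat 1)" for m
  proof (rule moebius_denominator_invertible[OF _ mpow_square_scalar[OF V_p] p_odd])
    have "(q powi m)^p = q powi (int p * m)" by (simp add: power_int_power' mult.commute)
    also have "\<dots> = (q powi int p) powi m" by (rule power_int_mult)
    finally show "(q powi m)^p = 1" using q_p by simp
    show "(\<kappa>^2)^p * s^2 \<noteq> -1" using nondeg by (metis power_mult mult.commute)
  qed
  have q_step: "q^2 * q powi m = q powi (m + 2)" for m
  proof -
    have "q powi (m + 2) = q powi m * q powi 2" by (rule power_int_add) (simp add: q0)
    thus ?thesis by (simp add: mult.commute)
  qed
  have shift: "\<forall>m. U ** H m = H (m + 2) ** U"
  proof
    fix m
    have "invertible (mat ((q^2 * q powi m) * \<kappa>^2) ** (V ** V) + mat 1)"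
      unfolding q_step by (rule denominator_invertible)
    thus "U ** H m = H (m + 2) ** U"
      unfolding H_def
      using moebius_weyl_shift[OF weyl_square[OF weyl] denominator_invertible] q_step by simp
  qed
  have "zpow U k ** alpha0 q \<kappa> U V ** zpow U (1 - k)
      = (zpow U k ** H (-1)) ** matrix_inv U ** zpow U (1 - k)"
    by (simp add: alpha0_moebius H_def matrix_mul_assoc)
  also have "zpow U k ** H (-1) = H (2*k - 1) ** zpow U k"
    using zpow_shift[OF U_inv shift, of k "-1"] by (simp add: algebra_simps)
  also have "H (2*k - 1) ** zpow U k ** matrix_inv U ** zpow U (1 - k)
      = H (2*k - 1) ** (zpow U k ** matrix_inv U ** zpow U (1 - k))"
    by (simp only: matrix_mul_assoc)
  also have "\<dots> = beta q \<kappa> V k"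
    by (simp add: zpow_cancel[OF U_inv] H_def beta_moebius)
  finally show ?thesis ..
qed

text \<open>Third statement: a sandwich of integer powers survives conjugation by W.  Applied to
  u = W Y_1 W^{-1} and alpha_0 = W Y_2 W^{-1} it transports the second statement to the
  monodromy operators.\<close>

lemma conjugated_sandwich:
  fixes W U X Y Z :: "'d::finite op"
  assumes W_inv: "invertible W" and U_inv: "invertible U"
    and U_eq: "U = W ** Y ** matrix_inv W" and X_eq: "X = W ** Z ** matrix_inv W"
  shows "zpow U k ** X ** zpow U (1 - k) = W ** (zpow Y k ** Z ** zpow Y (1 - k)) ** matrix_inv W"
proof -
  note W_left = matrix_inv_left[OF W_inv]
  have W_cancel: "matrix_inv W ** (W ** A) = A" for A
    by (simp add: matrix_mul_assoc W_left)
  have "matrix_inv W ** U ** W = Y"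
    unfolding U_eq by (simp add: matrix_mul_assoc[symmetric] W_cancel W_left)
  moreover have "invertible (matrix_inv W)"
    using W_left invertible_right_inverse by blast
  ultimately have Y_inv: "invertible Y"
    using U_inv W_inv invertible_mult by metis
  show ?thesis
    unfolding X_eq U_eq zpow_conj[OF W_inv Y_inv] conj_cancel[OF W_left] ..
qed

text \<open>Instantiate the three statements at site n: v_n^p is scalar with value vs_n^p, so
  v_n^{2p} has value vs_n^{2p}; Oota's identities express u_n and alpha_{0,n} as conjugates by
  U_n of B^{-1}(mu_+) A(mu_+) and A^{-1}(mu_-) B(mu_-).\<close>

theorem mainTheorem4:
  fixes p N n :: nat and q qh :: complex
    and u v :: "nat \<Rightarrow> complex^'d::finite^'d"
    and us vs \<kappa> \<xi> :: "nat \<Rightarrow> complex"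
    and W :: "complex^'d^'d"
  assumes p_odd: "odd p" and p_ge: "p \<ge> 3"
    and q_p: "q ^ p = 1" and q2_prim: "primitive_root p (q^2)"
    and qh: "qh^2 = q"
    and n_site: "n \<in> {1..N}"
    and inv_u: "\<forall>m\<in>{1..N}. invertible (u m)"
    and inv_v: "\<forall>m\<in>{1..N}. invertible (v m)"
    and weyl: "\<forall>m\<in>{1..N}. u m ** v m = mat q ** v m ** u m"
    and us_nz: "\<forall>m\<in>{1..N}. us m \<noteq> 0" and vs_nz: "\<forall>m\<in>{1..N}. vs m \<noteq> 0"
    and u_p: "\<forall>m\<in>{1..N}. mpow (u m) p = mat (us m ^ p)"
    and v_p: "\<forall>m\<in>{1..N}. mpow (v m) p = mat (vs m ^ p)"
    and commute: "\<forall>m\<in>{1..N}. \<forall>m'\<in>{1..N}. m \<noteq> m' \<longrightarrow>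
        u m ** u m' = u m' ** u m \<and> u m ** v m' = v m' ** u m \<and>
        v m ** u m' = u m' ** v m \<and> v m ** v m' = v m' ** v m"
    and kappa_nz: "\<forall>m\<in>{1..N}. \<kappa> m \<noteq> 0"
    and kappa4: "\<forall>m\<in>{1..N}. \<kappa> m ^ 4 \<noteq> 1"
    and vk: "\<forall>m\<in>{1..N}. vs m ^ (2*p) * \<kappa> m ^ (2*p) \<noteq> -1"
    and W_inv: "invertible W"
    and W_cyc: "\<forall>lam. conj2 W (monodromy qh u v \<kappa> \<xi> N lam) =
        laxprod qh u v \<kappa> \<xi> (rev [1..<n] @ rev [n..<N+1]) lam"
    and B_inv: "invertible (opB (monodromy qh u v \<kappa> \<xi> N (\<i> * \<kappa> n * qh * \<xi> n)))"
    and A_inv: "invertible (opA (monodromy qh u v \<kappa> \<xi> N (\<i> * inverse (\<kappa> n) * qh * \<xi> n)))"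
    and oota_u: "u n = W ** (matrix_inv (opB (monodromy qh u v \<kappa> \<xi> N (\<i> * \<kappa> n * qh * \<xi> n)))
        ** opA (monodromy qh u v \<kappa> \<xi> N (\<i> * \<kappa> n * qh * \<xi> n))) ** matrix_inv W"
    and oota_alpha: "alpha0 q (\<kappa> n) (u n) (v n) =
        W ** (matrix_inv (opA (monodromy qh u v \<kappa> \<xi> N (\<i> * inverse (\<kappa> n) * qh * \<xi> n)))
        ** opB (monodromy qh u v \<kappa> \<xi> N (\<i> * inverse (\<kappa> n) * qh * \<xi> n))) ** matrix_inv W"
  shows "(\<forall>k\<in>{1..p-1}.
            mpow (v n) (2*k) =
            mat ((-1)^k * (vs n ^ (2*p) * \<kappa> n ^ (2*p) + 1) /
                 (of_nat p * \<kappa> n ^ (2*k) * (\<kappa> n ^ 2 - inverse (\<kappa> n ^ 2)))) **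
            (\<Sum>a<p. mat (q powi (- (int k * (2 * int a - 1)))) ** beta q (\<kappa> n) (v n) (int a)))
       \<and> (\<forall>k::int. beta q (\<kappa> n) (v n) k =
            zpow (u n) k ** alpha0 q (\<kappa> n) (u n) (v n) ** zpow (u n) (1 - k))
       \<and> (\<forall>k::int. beta q (\<kappa> n) (v n) k =
            W ** (zpow (matrix_inv (opB (monodromy qh u v \<kappa> \<xi> N (\<i> * \<kappa> n * qh * \<xi> n)))
                         ** opA (monodromy qh u v \<kappa> \<xi> N (\<i> * \<kappa> n * qh * \<xi> n))) k
                  ** (matrix_inv (opA (monodromy qh u v \<kappa> \<xi> N (\<i> * inverse (\<kappa> n) * qh * \<xi> n)))
                      ** opB (monodromy qh u v \<kappa> \<xi> N (\<i> * inverse (\<kappa> n) * qh * \<xi> n)))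
                  ** zpow (matrix_inv (opB (monodromy qh u v \<kappa> \<xi> N (\<i> * \<kappa> n * qh * \<xi> n)))
                         ** opA (monodromy qh u v \<kappa> \<xi> N (\<i> * \<kappa> n * qh * \<xi> n))) (1 - k))
            ** matrix_inv W)"
proof -
  have u_inv: "invertible (u n)" and v_weyl: "u n ** v n = mat q ** v n ** u n"
    and v_p_n: "mpow (v n) p = mat (vs n ^ p)"
    and \<kappa>0: "\<kappa> n \<noteq> 0" and \<kappa>4: "\<kappa> n ^ 4 \<noteq> 1"
    using n_site inv_u weyl v_p kappa_nz kappa4 by blast+
  have vs_square: "(vs n ^ p)^2 = vs n ^ (2*p)" by (simp add: power_mult mult.commute)
  have nondeg: "(vs n ^ p)^2 * \<kappa> n ^ (2*p) \<noteq> -1"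
    using vk n_site unfolding vs_square by blast
  have beta_alpha0: "\<forall>k. beta q (\<kappa> n) (v n) k =
      zpow (u n) k ** alpha0 q (\<kappa> n) (u n) (v n) ** zpow (u n) (1 - k)"
    using beta_from_alpha0[OF p_odd q_p u_inv v_weyl v_p_n nondeg] by blast
  show ?thesis
  proof (intro conjI ballI allI)
    fix k assume "k \<in> {1..p-1}"
    hence "1 \<le> k" "k < p" using p_ge by auto
    from even_power_from_betas[OF p_odd q_p q2_prim v_p_n nondeg \<kappa>0 \<kappa>4 this]
    show "mpow (v n) (2*k) = mat ((-1)^k * (vs n ^ (2*p) * \<kappa> n ^ (2*p) + 1) /
            (of_nat p * \<kappa> n ^ (2*k) * (\<kappa> n ^ 2 - inverse (\<kappa> n ^ 2)))) **
          (\<Sum>a<p. mat (q powi (- (int k * (2 * int a - 1)))) ** beta q (\<kappa> n) (v n) (int a))"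
      unfolding vs_square .
  qed (use beta_alpha0 conjugated_sandwich[OF W_inv u_inv oota_u oota_alpha] in auto)
qed

end
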